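(* Let $p\in(\tfrac12,1)$, $\mu=(1-p,p)^{\mathbb Z}$ and $\nu=(p,1-p)^{\mathbb Z}$ on $\Omega=\{0,1\}^{\mathbb Z}$. There exists a joining $\xi$ of $\mu$ and $\nu$ that is monotone and of marker form.
   Context: For $x\in\Omega=\{0,1\}^{\mathbb Z}$, an interval $[i,i+1]\subset\mathbb Z$ is a primary marker of $x$ if $x_i=0$ and $x_{i+1}=1$. Under $\mu$ each coordinate equals $1$ with probability $p$; under $\nu$ with probability $1-p$. A joining of $\mu$ and $\nu$ is a probability measure $\xi$ on $\Omega\times\Omega$ with marginals $\mu$ and $\nu$ that is invariant under $T\times T$, where $T$ is the left shift. $\xi$ is monotone if $\xi\{(x,y): x_i\ge y_i\ \forall i\in\mathbb Z\}=1$. $\xi$ is of marker form if for $\xi$-a.e. $(x,y)$ the sequences $x$ and $y$ have exactly the same primary markers. *)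

theory Defs
  imports "HOL-Probability.Probability"
begin

text \<open>Configurations: \<Omega> = {0,1}^Z is rendered as int \<Rightarrow> bool, with True = 1, False = 0.\<close>

type_synonym config = "int \<Rightarrow> bool"

definition bernoulli_product :: "real \<Rightarrow> config measure" where
  "bernoulli_product q = PiM UNIV (\<lambda>_::int. measure_pmf (bernoulli_pmf q))"

definition left_shift :: "config \<Rightarrow> config" where
  "left_shift x = (\<lambda>i. x (i + 1))"

definition joining :: "config measure \<Rightarrow> config measure \<Rightarrow> (config \<times> config) measure \<Rightarrow> bool" where
  "joining m1 m2 \<xi> \<longleftrightarrow>
     prob_space \<xi> \<and>
     sets \<xi> = sets (m1 \<Otimes>\<^sub>M m2) \<and>
     distr \<xi> m1 fst = m1 \<and>
     distr \<xi> m2 snd = m2 \<and>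
     distr \<xi> \<xi> (\<lambda>(x, y). (left_shift x, left_shift y)) = \<xi>"

definition monotone_joining :: "(config \<times> config) measure \<Rightarrow> bool" where
  "monotone_joining \<xi> \<longleftrightarrow> (AE (x, y) in \<xi>. \<forall>i. y i \<longrightarrow> x i)"

definition primary_marker :: "config \<Rightarrow> int \<Rightarrow> bool" where
  "primary_marker x i \<longleftrightarrow> \<not> x i \<and> x (i + 1)"

definition marker_form :: "(config \<times> config) measure \<Rightarrow> bool" where
  "marker_form \<xi> \<longleftrightarrow> (AE (x, y) in \<xi>. \<forall>i. primary_marker x i \<longleftrightarrow> primary_marker y i)"

end

theory Submission
  imports Defs
begin

text \<open>
  Let \<open>z\<^sub>i = (x\<^sub>i, v\<^sub>i)\<close> be i.i.d., with \<open>x\<^sub>i\<close> Bernoulli(\<open>p\<close>) and an independent coin \<open>v\<^sub>i\<close>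
  Bernoulli(\<open>(1 - p) / p\<close>), a probability because \<open>p > 1/2\<close>. Thin \<open>x\<close> to \<open>y\<close> by keeping the
  first 1 of every run of 1s and each later 1 of the run as long as all coins since the start of
  the run came up 1. Then \<open>y \<le> x\<close>, both have the same primary markers, and \<open>(x, y)\<close> is a
  shift-equivariant image of the i.i.d. sequence \<open>z\<close>; so its law is the required joining once \<open>y\<close>
  is shown to be i.i.d. Bernoulli(\<open>1 - p\<close>).

  The pair \<open>(x\<^sub>i, y\<^sub>i)\<close> is a Markov chain driven by the fresh pair \<open>z (i + 1)\<close>. Shift invariance
  forces \<open>P(y\<^sub>i = 1) = 1 - p\<close>, hence the chain is stationary, and a time-reversal identity shows
  that under the stationary law the state at time \<open>i + 1\<close> is independent of \<open>y\<^sub>i\<close>. Induction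
  along an interval then yields the product formula for \<open>y\<close> on every interval of \<open>\<int>\<close>, which
  determines the law of \<open>y\<close>.
\<close>

section \<open>Product measures indexed by the integers\<close>

lemma measurable_into_bernoulli_product:
  assumes "\<And>i. (\<lambda>z. f z i) \<in> measurable N (count_space UNIV)"
  shows "f \<in> measurable N (bernoulli_product q)"
  unfolding bernoulli_product_def by (rule measurable_PiM_single') (auto simp: assms)

lemma measurable_bernoulli_product_component[measurable]:
  "(\<lambda>x. x i) \<in> measurable (bernoulli_product q) (count_space UNIV)"
proof -
  have "(\<lambda>x. x i) \<in> measurable (bernoulli_product q) (measure_pmf (bernoulli_pmf q))"
    unfolding bernoulli_product_def by (rule measurable_component_singleton) simp
  then show ?thesis by simp
qed

lemma measurable_left_shift: "left_shift \<in> measurable (bernoulli_product q) (bernoulli_product q)"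
  unfolding left_shift_def by (rule measurable_into_bernoulli_product) simp

lemma emeasure_PiM_coordinate_Times:
  fixes M :: "'i \<Rightarrow> 'a measure"
  assumes M: "\<And>i. prob_space (M i)"
    and Q[measurable]: "Measurable.pred (PiM UNIV M) Q"
    and Q_indep: "\<And>z v. Q (z(k := v)) = Q z"
    and A[measurable]: "A \<in> sets (M k)"
  shows "emeasure (PiM UNIV M) {z\<in>space (PiM UNIV M). Q z \<and> z k \<in> A}
       = emeasure (M k) A * emeasure (PiM (UNIV - {k}) M) {X\<in>space (PiM (UNIV - {k}) M). Q X}"
proof -
  define N where "N = PiM (UNIV - {k}) M"
  interpret N: prob_space N unfolding N_def by (intro prob_space_PiM M)
  interpret Mk: prob_space "M k" by (rule M)
  have insert_k: "insert k (UNIV - {k}) = UNIV" by auto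
  let ?upd = "\<lambda>(x, X). X(k := x)"
  have distr_upd: "distr (M k \<Otimes>\<^sub>M N) (PiM UNIV M) ?upd = PiM UNIV M"
    using distr_pair_PiM_eq_PiM[of "UNIV - {k}" M k] M unfolding N_def insert_k by simp
  have upd_eq: "?upd = (\<lambda>w. (snd w)(k := fst w))" by auto
  have measurable_upd: "?upd \<in> measurable (M k \<Otimes>\<^sub>M N) (PiM UNIV M)"
    unfolding upd_eq N_def by (rule measurable_fun_upd[where J="UNIV - {k}"]) auto
  obtain c where c: "c \<in> space (M k)" using Mk.not_empty by blast
  have "(\<lambda>X. X(k := c)) \<in> measurable N (PiM UNIV M)"
    unfolding N_def using c by (intro measurable_fun_upd[where J="UNIV - {k}"]) auto
  then have "{X\<in>space N. Q (X(k := c))} \<in> sets N" by measurable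
  then have Q_N: "{X\<in>space N. Q X} \<in> sets N" by (simp add: Q_indep)
  have "?upd -` {z\<in>space (PiM UNIV M). Q z \<and> z k \<in> A} \<inter> space (M k \<Otimes>\<^sub>M N)
      = A \<times> {X\<in>space N. Q X}"
    using sets.sets_into_space[OF A] unfolding N_def
    by (auto simp: space_pair_measure space_PiM Q_indep PiE_def extensional_def Pi_def)
  then have "emeasure (PiM UNIV M) {z\<in>space (PiM UNIV M). Q z \<and> z k \<in> A}
      = emeasure (M k \<Otimes>\<^sub>M N) (A \<times> {X\<in>space N. Q X})"
    by (subst (1) distr_upd[symmetric], subst emeasure_distr[OF measurable_upd]) auto
  also have "\<dots> = emeasure (M k) A * emeasure N {X\<in>space N. Q X}"
    using A Q_N by (intro N.emeasure_pair_measure_Times)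
  finally show ?thesis unfolding N_def .
qed

lemma measure_PiM_coordinate_independent:
  fixes M :: "'i \<Rightarrow> 'a measure"
  assumes M: "\<And>i. prob_space (M i)"
    and Q: "Measurable.pred (PiM UNIV M) Q"
    and Q_indep: "\<And>z v. Q (z(k := v)) = Q z"
    and B: "B \<in> sets (M k)"
  shows "measure (PiM UNIV M) {z\<in>space (PiM UNIV M). Q z \<and> z k \<in> B}
       = measure (PiM UNIV M) {z\<in>space (PiM UNIV M). Q z} * measure (M k) B"
proof -
  interpret P: prob_space "PiM UNIV M" by (intro prob_space_PiM M)
  interpret Mk: prob_space "M k" by (rule M)
  have "{z\<in>space (PiM UNIV M). Q z} = {z\<in>space (PiM UNIV M). Q z \<and> z k \<in> space (M k)}"
    by (auto simp: space_PiM)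
  then have "emeasure (PiM UNIV M) {z\<in>space (PiM UNIV M). Q z \<and> z k \<in> B}
      = emeasure (PiM UNIV M) {z\<in>space (PiM UNIV M). Q z} * emeasure (M k) B"
    using emeasure_PiM_coordinate_Times[OF M Q Q_indep B]
      emeasure_PiM_coordinate_Times[OF M Q Q_indep sets.top] Mk.emeasure_space_1
    by (simp add: mult.commute)
  then show ?thesis
    by (simp add: P.emeasure_eq_measure Mk.emeasure_eq_measure flip: ennreal_mult)
qed

lemma distr_PiM_int_shift:
  assumes "prob_space M"
  shows "distr (PiM UNIV (\<lambda>_::int. M)) (PiM UNIV (\<lambda>_. M)) (\<lambda>z j. z (j + 1)) = PiM UNIV (\<lambda>_. M)"
proof -
  have restrict_UNIV: "(\<lambda>z. \<lambda>j\<in>UNIV. z (j + 1)) = (\<lambda>z j. z (j + 1 :: int))"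
    by (auto simp: restrict_def)
  show ?thesis
    using distr_PiM_reindex[of UNIV "\<lambda>_. M" "\<lambda>j::int. j + 1" UNIV] assms
    unfolding restrict_UNIV by (simp add: inj_on_def)
qed

lemma distr_eq_PiM_int_by_intervals:
  fixes M :: "'a measure" and N :: "'b measure"
  assumes N: "prob_space N" and M: "prob_space M"
    and f: "f \<in> measurable N (PiM UNIV (\<lambda>_::int. M))"
    and intervals: "\<And>m n F. (\<And>k. F k \<in> sets M) \<Longrightarrow>
        measure N {z\<in>space N. \<forall>k\<in>{m..<m + int n}. f z k \<in> F k}
          = (\<Prod>k\<in>{m..<m + int n}. measure M (F k))"
  shows "distr N (PiM UNIV (\<lambda>_. M)) f = PiM UNIV (\<lambda>_. M)"
proof -
  interpret N: prob_space N by (fact N)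
  interpret M: prob_space M by (fact M)
  interpret P: product_prob_space "\<lambda>_::int. M" UNIV by unfold_locales
  show ?thesis
  proof (rule P.PiM_eq)
    fix J :: "int set" and F :: "int \<Rightarrow> 'a set"
    assume J: "finite J" and F: "\<And>j. j \<in> J \<Longrightarrow> F j \<in> sets M"
    obtain K where K: "abs ` J \<subseteq> {..<K}" using J finite_int_iff_bounded by blast
    define n where "n = nat (2 * K)"
    have J_interval: "J \<subseteq> {-K..<-K + int n}" using K unfolding n_def by force
    define F' where "F' k = (if k \<in> J then F k else space M)" for k
    have F': "F' k \<in> sets M" for k using F unfolding F'_def by auto
    have "f -` prod_emb UNIV (\<lambda>_. M) J (Pi\<^sub>E J F) \<inter> space N
        = {z\<in>space N. \<forall>k\<in>{-K..<-K + int n}. f z k \<in> F' k}"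
      using J_interval measurable_space[OF f]
      by (auto simp: prod_emb_def space_PiM PiE_iff F'_def) blast
    then have "emeasure (distr N (PiM UNIV (\<lambda>_. M)) f) (prod_emb UNIV (\<lambda>_. M) J (Pi\<^sub>E J F))
        = measure N {z\<in>space N. \<forall>k\<in>{-K..<-K + int n}. f z k \<in> F' k}"
      using J F by (subst emeasure_distr[OF f]) (auto intro!: sets_PiM_I simp: N.emeasure_eq_measure)
    also have "\<dots> = (\<Prod>k\<in>{-K..<-K + int n}. measure M (F' k))"
      by (simp only: intervals[OF F'])
    also have "(\<Prod>k\<in>{-K..<-K + int n}. measure M (F' k)) = (\<Prod>k\<in>J. measure M (F k))"
      by (rule prod.mono_neutral_cong_right[OF _ J_interval]) (auto simp: F'_def M.prob_space)
    also have "ennreal \<dots> = (\<Prod>k\<in>J. emeasure M (F k))"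
      by (simp add: M.emeasure_eq_measure prod_ennreal)
    finally show "emeasure (distr N (PiM UNIV (\<lambda>_. M)) f) (prod_emb UNIV (\<lambda>_. M) J (Pi\<^sub>E J F))
        = (\<Prod>k\<in>J. emeasure M (F k))" .
  qed simp
qed

lemma distr_PiM_componentwise:
  fixes M :: "'a measure" and M' :: "'b measure"
  assumes M: "prob_space M" and f[measurable]: "f \<in> measurable M M'"
  shows "distr (PiM UNIV (\<lambda>_::'i. M)) (PiM UNIV (\<lambda>_. M')) (\<lambda>z i. f (z i))
    = PiM UNIV (\<lambda>_. distr M M' f)"
proof -
  interpret M: prob_space M by (fact M)
  interpret P: product_prob_space "\<lambda>_. M" UNIV by unfold_locales
  interpret Mf: prob_space "distr M M' f" using f by (rule M.prob_space_distr)
  interpret D: product_prob_space "\<lambda>_. distr M M' f" UNIV by unfold_locales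
  have map_f: "(\<lambda>z i. f (z i)) \<in> measurable (PiM UNIV (\<lambda>_. M)) (PiM UNIV (\<lambda>_. M'))"
    by (rule measurable_PiM_single')
      (measurable, auto simp: space_PiM PiE_iff intro: measurable_space[OF f])
  show ?thesis
  proof (rule D.PiM_eq)
    fix J :: "'i set" and F :: "'i \<Rightarrow> 'b set"
    assume J: "finite J" and F: "\<And>j. j \<in> J \<Longrightarrow> F j \<in> sets (distr M M' f)"
    have emb_distr: "prod_emb UNIV (\<lambda>_. distr M M' f) J X = prod_emb UNIV (\<lambda>_. M') J X" for X
      by (simp add: prod_emb_def)
    have emb_sets: "prod_emb UNIV (\<lambda>_. M') J (Pi\<^sub>E J F) \<in> sets (PiM UNIV (\<lambda>_. M'))"
      using J F by (intro sets_PiM_I) auto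
    have preimage: "(\<lambda>z i. f (z i)) -` prod_emb UNIV (\<lambda>_. M') J (Pi\<^sub>E J F) \<inter> space (PiM UNIV (\<lambda>_. M))
        = prod_emb UNIV (\<lambda>_. M) J (Pi\<^sub>E J (\<lambda>j. f -` F j \<inter> space M))"
      using measurable_space[OF f] by (auto simp: prod_emb_iff PiE_iff space_PiM)
    have "emeasure (distr (PiM UNIV (\<lambda>_. M)) (PiM UNIV (\<lambda>_. M')) (\<lambda>z i. f (z i)))
          (prod_emb UNIV (\<lambda>_. distr M M' f) J (Pi\<^sub>E J F))
        = emeasure (PiM UNIV (\<lambda>_. M)) (prod_emb UNIV (\<lambda>_. M) J (Pi\<^sub>E J (\<lambda>j. f -` F j \<inter> space M)))"
      unfolding emb_distr emeasure_distr[OF map_f emb_sets] preimage ..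
    also have "\<dots> = (\<Prod>j\<in>J. emeasure M (f -` F j \<inter> space M))"
      using J F f by (intro P.emeasure_PiM_emb) auto
    also have "\<dots> = (\<Prod>j\<in>J. emeasure (distr M M' f) (F j))"
      using F f by (intro prod.cong) (auto simp: emeasure_distr)
    finally show "emeasure (distr (PiM UNIV (\<lambda>_. M)) (PiM UNIV (\<lambda>_. M')) (\<lambda>z i. f (z i)))
          (prod_emb UNIV (\<lambda>_. distr M M' f) J (Pi\<^sub>E J F)) = (\<Prod>j\<in>J. emeasure (distr M M' f) (F j))" .
  qed (simp only: sets_distr, rule sets_PiM_cong, simp_all)
qed

section \<open>Thinning the runs of ones\<close>

definition upper :: "(int \<Rightarrow> bool \<times> bool) \<Rightarrow> config" where
  "upper z i \<longleftrightarrow> fst (z i)"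

text \<open>The coin at the first site \<open>j\<close> of a run is never consulted, since \<open>{j - 1..i}\<close> then
  contains a 0; so a run of \<open>x\<close> always keeps its first 1.\<close>

definition thin :: "(int \<Rightarrow> bool \<times> bool) \<Rightarrow> config" where
  "thin z i \<longleftrightarrow> fst (z i) \<and> (\<forall>j\<le>i. (\<forall>l\<in>{j - 1..i}. fst (z l)) \<longrightarrow> snd (z j))"

lemma thin_imp_upper: "thin z i \<Longrightarrow> upper z i"
  by (simp add: thin_def upper_def)

lemma thin_succ:
  "thin z (i + 1) \<longleftrightarrow> upper z (i + 1) \<and> (\<not> upper z i \<or> thin z i \<and> snd (z (i + 1)))"
proof -
  have run_succ: "(\<forall>l\<in>{j - 1..i + 1}. fst (z l)) \<longleftrightarrow> (\<forall>l\<in>{j - 1..i}. fst (z l)) \<and> fst (z (i + 1))"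
    if "j \<le> i" for j
  proof -
    have "{j - 1..i + 1} = insert (i + 1) {j - 1..i}" using that by auto
    then show ?thesis by auto
  qed
  have le_succ: "j \<le> i + 1 \<longleftrightarrow> j \<le> i \<or> j = i + 1" for j by auto
  have last_run: "{i..i + 1} = {i, i + 1}" by auto
  have "thin z (i + 1) \<longleftrightarrow> fst (z (i + 1)) \<and> (\<forall>j\<le>i. (\<forall>l\<in>{j - 1..i}. fst (z l)) \<longrightarrow> snd (z j))
      \<and> (fst (z i) \<longrightarrow> snd (z (i + 1)))"
    unfolding thin_def le_succ using run_succ by (auto simp: last_run)
  moreover have "(\<forall>l\<in>{j - 1..i}. fst (z l)) \<Longrightarrow> fst (z i)" if "j \<le> i" for j
    using that by auto
  ultimately show ?thesis unfolding thin_def upper_def by blast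
qed

lemma thin_fun_upd: "i < k \<Longrightarrow> thin (z(k := c)) i = thin z i"
  unfolding thin_def by (intro conj_cong all_cong imp_cong ball_cong) auto

lemma thin_shift: "thin (\<lambda>j. z (j + 1)) i = thin z (i + 1)"
proof -
  have run: "(\<forall>l\<in>{j - 1..i}. fst (z (l + 1))) \<longleftrightarrow> (\<forall>l\<in>{j + 1 - 1..i + 1}. fst (z l))" for j
  proof -
    have shifted: "{j + 1 - 1..i + 1} = (\<lambda>l. l + 1) ` {j - 1..i}" by simp
    show ?thesis unfolding shifted by blast
  qed
  have reindex: "(\<forall>j\<le>i. Q (j + 1)) \<longleftrightarrow> (\<forall>j\<le>i + 1. Q j)" for Q :: "int \<Rightarrow> bool"
    by (metis add.commute add_le_cancel_left diff_add_cancel le_diff_eq)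
  show ?thesis
    unfolding thin_def run reindex[of "\<lambda>j. (\<forall>l\<in>{j - 1..i + 1}. fst (z l)) \<longrightarrow> snd (z j)"] by simp
qed

lemma primary_marker_thin: "primary_marker (thin z) i \<longleftrightarrow> primary_marker (upper z) i"
  using thin_succ[of z i] thin_imp_upper[of z i] thin_imp_upper[of z "i + 1"]
  unfolding primary_marker_def by auto

definition thin_step :: "bool \<times> bool \<Rightarrow> bool \<times> bool \<Rightarrow> bool \<times> bool" where
  "thin_step s c = (fst c, fst c \<and> (\<not> fst s \<or> snd s \<and> snd c))"

definition thin_state :: "(int \<Rightarrow> bool \<times> bool) \<Rightarrow> int \<Rightarrow> bool \<times> bool" where
  "thin_state z i = (upper z i, thin z i)"

lemma thin_state_succ: "thin_state z (i + 1) = thin_step (thin_state z i) (z (i + 1))"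
  by (simp add: thin_state_def thin_step_def thin_succ upper_def)

lemma thin_state_fun_upd: "i < k \<Longrightarrow> thin_state (z(k := c)) i = thin_state z i"
  by (simp add: thin_state_def upper_def thin_fun_upd)

section \<open>The thinned sequence is i.i.d.\<close>

lemma measure_pmf_eq_sum_UNIV:
  fixes M :: "'a::finite pmf"
  shows "measure (measure_pmf M) A = (\<Sum>x\<in>UNIV. if x \<in> A then pmf M x else 0)"
  by (simp add: measure_measure_pmf_finite sum.If_cases)

lemma sum_UNIV_bool_pair:
  "(\<Sum>c\<in>UNIV. f c) = f (True, True) + f (True, False) + f (False, True) + f (False, False)"
proof -
  have UNIV_pair: "(UNIV :: (bool \<times> bool) set) = {(True, True), (True, False), (False, True), (False, False)}"
    by auto
  show ?thesis unfolding UNIV_pair by (simp add: add.assoc)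
qed

definition thinning_coin :: "real \<Rightarrow> (bool \<times> bool) pmf" where
  "thinning_coin p = pair_pmf (bernoulli_pmf p) (bernoulli_pmf ((1 - p) / p))"

definition thinning_seed :: "real \<Rightarrow> (int \<Rightarrow> bool \<times> bool) measure" where
  "thinning_seed p = PiM UNIV (\<lambda>_. measure_pmf (thinning_coin p))"

lemma space_thinning_seed[simp]: "space (thinning_seed p) = UNIV"
  by (simp add: thinning_seed_def space_PiM prob_space_measure_pmf)

lemma prob_space_thinning_seed: "prob_space (thinning_seed p)"
  unfolding thinning_seed_def by (intro prob_space_PiM prob_space_measure_pmf)

lemma measurable_thinning_seed_component[measurable]:
  "(\<lambda>z. z i) \<in> measurable (thinning_seed p) (count_space UNIV)"
  using measurable_component_singleton[of i UNIV "\<lambda>_. measure_pmf (thinning_coin p)"]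
  by (simp add: thinning_seed_def)

lemma measurable_thinning_seed_fst[measurable]:
  "(\<lambda>z. fst (z i)) \<in> measurable (thinning_seed p) (count_space UNIV)"
  by (rule measurable_compose[OF measurable_thinning_seed_component]) simp

lemma measurable_thinning_seed_snd[measurable]:
  "(\<lambda>z. snd (z i)) \<in> measurable (thinning_seed p) (count_space UNIV)"
  by (rule measurable_compose[OF measurable_thinning_seed_component]) simp

lemma measurable_upper[measurable]: "(\<lambda>z. upper z i) \<in> measurable (thinning_seed p) (count_space UNIV)"
  unfolding upper_def by measurable

lemma measurable_thin[measurable]: "(\<lambda>z. thin z i) \<in> measurable (thinning_seed p) (count_space UNIV)"
  unfolding thin_def by measurable

lemma measurable_thin_window:
  "Measurable.pred (thinning_seed p) (\<lambda>z. \<forall>k\<in>W. thin z k \<in> F k)"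
  by (rule pred_intros_countable_bounded(3), rule measurable_compose[OF measurable_thin]) simp

lemma measurable_thin_state[measurable]:
  "(\<lambda>z. thin_state z i) \<in> measurable (thinning_seed p) (count_space UNIV)"
  unfolding thin_state_def by measurable

lemma measurable_thinning_seed_shift:
  "(\<lambda>z j. z (j + 1)) \<in> measurable (thinning_seed p) (thinning_seed p)"
  by (subst (2) thinning_seed_def, rule measurable_PiM_single') auto

lemma distr_thinning_seed_shift:
  "distr (thinning_seed p) (thinning_seed p) (\<lambda>z j. z (j + 1)) = thinning_seed p"
  unfolding thinning_seed_def by (rule distr_PiM_int_shift) (rule prob_space_measure_pmf)

lemma distr_upper: "distr (thinning_seed p) (bernoulli_product p) upper = bernoulli_product p"
proof -
  have coin_fst: "distr (measure_pmf (thinning_coin p)) (measure_pmf (bernoulli_pmf p)) fst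
      = measure_pmf (bernoulli_pmf p)"
  proof -
    have "distr (measure_pmf (thinning_coin p)) (measure_pmf (bernoulli_pmf p)) fst
        = distr (measure_pmf (thinning_coin p)) (count_space UNIV) fst"
      by (rule distr_cong) simp_all
    also have "\<dots> = measure_pmf (bernoulli_pmf p)"
      by (simp add: thinning_coin_def map_fst_pair_pmf flip: map_pmf_rep_eq)
    finally show ?thesis .
  qed
  have upper_eq: "upper = (\<lambda>z i. fst (z i))" by (simp add: upper_def fun_eq_iff)
  show ?thesis
    unfolding upper_eq
    using distr_PiM_componentwise[of "measure_pmf (thinning_coin p)" fst "measure_pmf (bernoulli_pmf p)"]
    by (simp add: thinning_seed_def bernoulli_product_def coin_fst prob_space_measure_pmf)
qed

locale thinning =
  fixes p :: real
  assumes half_less_p: "1/2 < p" and p_less_1: "p < 1"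
begin

interpretation seed: prob_space "thinning_seed p" by (rule prob_space_thinning_seed)

lemma pmf_thinning_coin:
  "pmf (thinning_coin p) c = (if fst c then p else 1 - p) * (if snd c then (1 - p) / p else 1 - (1 - p) / p)"
proof -
  have "0 \<le> (1 - p) / p" "(1 - p) / p \<le> 1" using half_less_p p_less_1 by (auto simp: field_simps)
  then show ?thesis
    using half_less_p p_less_1 by (cases c) (simp add: thinning_coin_def pmf_pair)
qed

lemma measure_thinning_seed_independent:
  assumes Q: "Measurable.pred (thinning_seed p) Q" and Q_indep: "\<And>z c. Q (z(k := c)) = Q z"
  shows "measure (thinning_seed p) {z. Q z \<and> z k \<in> B}
       = measure (thinning_seed p) {z. Q z} * measure (thinning_coin p) B"
  using measure_PiM_coordinate_independent[of "\<lambda>_. measure_pmf (thinning_coin p)" Q k B] Q Q_indep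
  by (simp add: thinning_seed_def space_PiM prob_space_measure_pmf)

lemma measure_thin_state_partition:
  assumes [measurable]: "Measurable.pred (thinning_seed p) Q"
  shows "measure (thinning_seed p) {z. Q z}
       = (\<Sum>s\<in>UNIV. measure (thinning_seed p) {z. Q z \<and> thin_state z i = s})"
proof -
  have "{z. Q z} = (\<Union>s. {z. Q z \<and> thin_state z i = s})" by auto
  also have "measure (thinning_seed p) \<dots> = (\<Sum>s\<in>UNIV. measure (thinning_seed p) {z. Q z \<and> thin_state z i = s})"
  proof (rule seed.finite_measure_finite_Union)
    have "{z\<in>space (thinning_seed p). Q z \<and> thin_state z i = s} \<in> sets (thinning_seed p)" for s
      by measurable
    then show "range (\<lambda>s. {z. Q z \<and> thin_state z i = s}) \<subseteq> sets (thinning_seed p)" by auto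
  qed (auto simp: disjoint_family_on_def)
  finally show ?thesis .
qed

definition transition :: "bool \<times> bool \<Rightarrow> bool \<times> bool \<Rightarrow> real" where
  "transition s t = measure (thinning_coin p) {c. thin_step s c = t}"

lemma measure_thin_state_succ:
  assumes [measurable]: "Measurable.pred (thinning_seed p) Q"
    and Q_indep: "\<And>z c. Q (z(i + 1 := c)) = Q z"
  shows "measure (thinning_seed p) {z. Q z \<and> thin_state z (i + 1) = t}
       = (\<Sum>s\<in>UNIV. measure (thinning_seed p) {z. Q z \<and> thin_state z i = s} * transition s t)"
proof -
  have "measure (thinning_seed p) {z. Q z \<and> thin_state z (i + 1) = t}
      = (\<Sum>s\<in>UNIV. measure (thinning_seed p) {z. (Q z \<and> thin_state z i = s) \<and> z (i + 1) \<in> {c. thin_step s c = t}})"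
    by (subst measure_thin_state_partition[where i = i])
      (auto simp: thin_state_succ intro!: sum.cong arg_cong[where f = "measure _"])
  also have "\<dots> = (\<Sum>s\<in>UNIV. measure (thinning_seed p) {z. Q z \<and> thin_state z i = s} * transition s t)"
    unfolding transition_def
    by (intro sum.cong refl measure_thinning_seed_independent) (auto simp: Q_indep thin_state_fun_upd)
  finally show ?thesis .
qed

lemma measure_upper: "measure (thinning_seed p) {z. upper z i} = p"
proof -
  have "measure (thinning_seed p) {z. upper z i} = measure (thinning_seed p) {z. True \<and> z i \<in> {c. fst c}}"
    by (simp add: upper_def)
  also have "\<dots> = measure (thinning_coin p) {c. fst c}"
    by (subst measure_thinning_seed_independent) (simp_all add: seed.prob_space[simplified])
  also have "\<dots> = p"
    using half_less_p by (simp add: measure_pmf_eq_sum_UNIV sum_UNIV_bool_pair pmf_thinning_coin field_simps)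
  finally show ?thesis .
qed

lemma measure_thin_state_via_thin:
  "measure (thinning_seed p) {z. thin_state z i = t} =
    (if fst t then if snd t then measure (thinning_seed p) {z. thin z i}
                   else p - measure (thinning_seed p) {z. thin z i}
     else if snd t then 0 else 1 - p)"
proof -
  have [simp]: "{z. upper z i} \<in> sets (thinning_seed p)" "{z. thin z i} \<in> sets (thinning_seed p)"
    using measurable_sets[OF measurable_upper, of "{True}"] measurable_sets[OF measurable_thin, of "{True}"]
    by (simp_all add: vimage_def)
  obtain a b where t: "t = (a, b)" by fastforce
  show ?thesis
  proof (cases a; cases b)
    assume "a" "b"
    then have "{z. thin_state z i = t} = {z. thin z i}"
      unfolding t thin_state_def using thin_imp_upper by auto
    then show ?thesis using \<open>a\<close> \<open>b\<close> t by simp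
  next
    assume "a" "\<not> b"
    then have "{z. thin_state z i = t} = {z. upper z i} - {z. thin z i}"
      unfolding t thin_state_def by auto
    moreover have "{z. thin z i} \<subseteq> {z. upper z i}" using thin_imp_upper by auto
    ultimately show ?thesis using \<open>a\<close> \<open>\<not> b\<close> t by (simp add: seed.finite_measure_Diff measure_upper)
  next
    assume "\<not> a" "b"
    then have "{z. thin_state z i = t} = {}"
      unfolding t thin_state_def using thin_imp_upper by auto
    then show ?thesis using \<open>\<not> a\<close> \<open>b\<close> t by simp
  next
    assume "\<not> a" "\<not> b"
    then have "{z. thin_state z i = t} = space (thinning_seed p) - {z. upper z i}"
      unfolding t thin_state_def using thin_imp_upper by auto
    then show ?thesis using \<open>\<not> a\<close> \<open>\<not> b\<close> t by (simp add: seed.prob_compl[simplified] measure_upper)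
  qed
qed

lemma measure_thin_shift:
  "measure (thinning_seed p) {z. thin z (i + 1)} = measure (thinning_seed p) {z. thin z i}"
proof -
  have "{z. thin z i} \<in> sets (thinning_seed p)"
    using measurable_sets[OF measurable_thin, of "{True}"] by (simp add: vimage_def)
  moreover have "{z. thin z (i + 1)} = (\<lambda>z j. z (j + 1)) -` {z. thin z i} \<inter> space (thinning_seed p)"
    by (auto simp: thin_shift)
  ultimately show ?thesis
    using measure_distr[OF measurable_thinning_seed_shift, of "{z. thin z i}"]
    by (simp add: distr_thinning_seed_shift)
qed

definition stationary :: "bool \<times> bool \<Rightarrow> real" where
  "stationary s = (if fst s then if snd s then 1 - p else 2 * p - 1 else if snd s then 0 else 1 - p)"

lemma measure_thin: "measure (thinning_seed p) {z. thin z i} = 1 - p"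
proof -
  define a where "a = measure (thinning_seed p) {z. thin z i}"
  have "{z. True \<and> thin_state z (i + 1) = (True, True)} = {z. thin z (i + 1)}"
    using thin_imp_upper by (auto simp: thin_state_def)
  then have "a = measure (thinning_seed p) {z. True \<and> thin_state z (i + 1) = (True, True)}"
    by (simp add: a_def measure_thin_shift)
  also have "\<dots> = (\<Sum>s\<in>UNIV. measure (thinning_seed p) {z. True \<and> thin_state z i = s} * transition s (True, True))"
    by (rule measure_thin_state_succ) simp_all
  also have "\<dots> = a * (1 - p) + (1 - p) * p"
    using half_less_p unfolding sum_UNIV_bool_pair
    by (simp add: measure_thin_state_via_thin flip: a_def)
      (simp add: transition_def measure_pmf_eq_sum_UNIV sum_UNIV_bool_pair pmf_thinning_coin
        thin_step_def field_simps)
  finally have "a * p = (1 - p) * p" by (simp add: algebra_simps)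
  then show ?thesis using half_less_p by (simp add: a_def)
qed

lemma measure_thin_state: "measure (thinning_seed p) {z. thin_state z i = t} = stationary t"
  by (simp add: measure_thin_state_via_thin measure_thin stationary_def)

text \<open>Time reversal: under the stationary law the next state is independent of the current
  thinned bit, which is Bernoulli(\<open>1 - p\<close>).\<close>

lemma sum_stationary_transition:
  "(\<Sum>s\<in>UNIV. (if snd s \<in> F then stationary s else 0) * transition s t)
     = stationary t * measure (bernoulli_pmf (1 - p)) F"
proof -
  obtain a b where t: "t = (a, b)" by fastforce
  show ?thesis
    using half_less_p p_less_1
    unfolding sum_UNIV_bool_pair transition_def measure_pmf_eq_sum_UNIV t
    by (cases a; cases b; cases "True \<in> F"; cases "False \<in> F")
      (simp_all add: UNIV_bool pmf_thinning_coin thin_step_def stationary_def field_simps)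
qed

lemma measure_thin_window_state:
  "measure (thinning_seed p) {z. (\<forall>k\<in>{m..<m + int n}. thin z k \<in> F k) \<and> thin_state z (m + int n) = t}
     = stationary t * (\<Prod>k\<in>{m..<m + int n}. measure (bernoulli_pmf (1 - p)) (F k))"
proof (induction n arbitrary: t)
  case 0
  then show ?case by (simp add: measure_thin_state)
next
  case (Suc n)
  define i where "i = m + int n"
  have i_succ: "m + int (Suc n) = i + 1" by (simp add: i_def)
  have window_succ: "{m..<i + 1} = insert i {m..<i}" by (auto simp: i_def)
  let ?q = "\<lambda>k. measure (bernoulli_pmf (1 - p)) (F k)"
  have "measure (thinning_seed p) {z. (\<forall>k\<in>{m..<i + 1}. thin z k \<in> F k) \<and> thin_state z (i + 1) = t}
      = (\<Sum>s\<in>UNIV. measure (thinning_seed p) {z. (\<forall>k\<in>{m..<i + 1}. thin z k \<in> F k) \<and> thin_state z i = s}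
          * transition s t)"
  proof (rule measure_thin_state_succ)
    show "(\<forall>k\<in>{m..<i + 1}. thin (z(i + 1 := c)) k \<in> F k) = (\<forall>k\<in>{m..<i + 1}. thin z k \<in> F k)" for z c
      by (intro ball_cong refl) (simp add: thin_fun_upd)
  qed (rule measurable_thin_window)
  also have "\<dots> = (\<Sum>s\<in>UNIV. (if snd s \<in> F i then stationary s else 0) * transition s t) * (\<Prod>k\<in>{m..<i}. ?q k)"
    unfolding sum_distrib_right
  proof (rule sum.cong[OF refl])
    fix s :: "bool \<times> bool"
    have "{z. (\<forall>k\<in>{m..<i + 1}. thin z k \<in> F k) \<and> thin_state z i = s}
        = (if snd s \<in> F i then {z. (\<forall>k\<in>{m..<i}. thin z k \<in> F k) \<and> thin_state z i = s} else {})"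
      unfolding window_succ by (auto simp: thin_state_def)
    then show "measure (thinning_seed p) {z. (\<forall>k\<in>{m..<i + 1}. thin z k \<in> F k) \<and> thin_state z i = s} * transition s t
        = (if snd s \<in> F i then stationary s else 0) * transition s t * (\<Prod>k\<in>{m..<i}. ?q k)"
      using Suc.IH[of s] by (simp add: i_def)
  qed
  also have "\<dots> = stationary t * (\<Prod>k\<in>{m..<i + 1}. ?q k)"
    unfolding sum_stationary_transition window_succ by (simp add: i_def)
  finally show ?case unfolding i_succ .
qed

lemma measure_thin_window:
  "measure (thinning_seed p) {z. \<forall>k\<in>{m..<m + int n}. thin z k \<in> F k}
     = (\<Prod>k\<in>{m..<m + int n}. measure (bernoulli_pmf (1 - p)) (F k))"
proof -
  have "measure (thinning_seed p) {z. \<forall>k\<in>{m..<m + int n}. thin z k \<in> F k}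
      = (\<Sum>t\<in>UNIV. measure (thinning_seed p)
           {z. (\<forall>k\<in>{m..<m + int n}. thin z k \<in> F k) \<and> thin_state z (m + int n) = t})"
    by (rule measure_thin_state_partition, rule measurable_thin_window)
  also have "\<dots> = (\<Sum>t\<in>UNIV. stationary t) * (\<Prod>k\<in>{m..<m + int n}. measure (bernoulli_pmf (1 - p)) (F k))"
    by (simp only: measure_thin_window_state sum_distrib_right)
  also have "(\<Sum>t\<in>UNIV. stationary t) = 1"
    by (simp add: sum_UNIV_bool_pair stationary_def)
  finally show ?thesis by simp
qed

lemma distr_thin: "distr (thinning_seed p) (bernoulli_product (1 - p)) thin = bernoulli_product (1 - p)"
  unfolding bernoulli_product_def
proof (rule distr_eq_PiM_int_by_intervals)
  have "thin \<in> measurable (thinning_seed p) (bernoulli_product (1 - p))"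
    by (rule measurable_into_bernoulli_product) (rule measurable_thin)
  then show "thin \<in> measurable (thinning_seed p) (PiM UNIV (\<lambda>_. measure_pmf (bernoulli_pmf (1 - p))))"
    unfolding bernoulli_product_def .
  show "measure (thinning_seed p) {z\<in>space (thinning_seed p). \<forall>k\<in>{m..<m + int n}. thin z k \<in> F k}
      = (\<Prod>k\<in>{m..<m + int n}. measure (bernoulli_pmf (1 - p)) (F k))" for m n F
    using measure_thin_window by simp
qed (rule prob_space_thinning_seed, rule prob_space_measure_pmf)

end

section \<open>The thinning joining\<close>

lemma joining_distr_factor:
  assumes N: "prob_space N"
    and S: "S \<in> measurable N N" "distr N N S = N"
    and factor: "\<Phi> \<in> measurable N (m1 \<Otimes>\<^sub>M m2)"
    and marginals: "distr N m1 (\<lambda>z. fst (\<Phi> z)) = m1" "distr N m2 (\<lambda>z. snd (\<Phi> z)) = m2"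
    and shift: "left_shift \<in> measurable m1 m1" "left_shift \<in> measurable m2 m2"
    and equivariant: "\<And>z. z \<in> space N \<Longrightarrow> \<Phi> (S z) = (\<lambda>(x, y). (left_shift x, left_shift y)) (\<Phi> z)"
  shows "joining m1 m2 (distr N (m1 \<Otimes>\<^sub>M m2) \<Phi>)"
  unfolding joining_def
proof (intro conjI)
  interpret N: prob_space N by (fact N)
  let ?T = "\<lambda>(x, y). (left_shift x, left_shift y)"
  have T: "?T \<in> measurable (m1 \<Otimes>\<^sub>M m2) (m1 \<Otimes>\<^sub>M m2)"
    using shift by measurable
  show "prob_space (distr N (m1 \<Otimes>\<^sub>M m2) \<Phi>)"
    using factor by (rule N.prob_space_distr)
  show "sets (distr N (m1 \<Otimes>\<^sub>M m2) \<Phi>) = sets (m1 \<Otimes>\<^sub>M m2)" by simp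
  show "distr (distr N (m1 \<Otimes>\<^sub>M m2) \<Phi>) m1 fst = m1"
    using distr_distr[OF measurable_fst factor] marginals(1) by (simp add: comp_def)
  show "distr (distr N (m1 \<Otimes>\<^sub>M m2) \<Phi>) m2 snd = m2"
    using distr_distr[OF measurable_snd factor] marginals(2) by (simp add: comp_def)
  have "distr (distr N (m1 \<Otimes>\<^sub>M m2) \<Phi>) (distr N (m1 \<Otimes>\<^sub>M m2) \<Phi>) ?T
      = distr (distr N (m1 \<Otimes>\<^sub>M m2) \<Phi>) (m1 \<Otimes>\<^sub>M m2) ?T"
    by (rule distr_cong) simp_all
  also have "\<dots> = distr N (m1 \<Otimes>\<^sub>M m2) (?T \<circ> \<Phi>)"
    by (rule distr_distr[OF T factor])
  also have "\<dots> = distr N (m1 \<Otimes>\<^sub>M m2) (\<Phi> \<circ> S)"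
    by (rule distr_cong) (simp_all add: equivariant)
  also have "\<dots> = distr (distr N N S) (m1 \<Otimes>\<^sub>M m2) \<Phi>"
    by (rule distr_distr[symmetric, OF factor S(1)])
  finally show "distr (distr N (m1 \<Otimes>\<^sub>M m2) \<Phi>) (distr N (m1 \<Otimes>\<^sub>M m2) \<Phi>) ?T = distr N (m1 \<Otimes>\<^sub>M m2) \<Phi>"
    by (simp only: S(2))
qed

definition thinning_joining :: "real \<Rightarrow> (config \<times> config) measure" where
  "thinning_joining p = distr (thinning_seed p) (bernoulli_product p \<Otimes>\<^sub>M bernoulli_product (1 - p))
     (\<lambda>z. (upper z, thin z))"

lemma measurable_upper_thin:
  "(\<lambda>z. (upper z, thin z)) \<in> measurable (thinning_seed p) (bernoulli_product p \<Otimes>\<^sub>M bernoulli_product (1 - p))"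
  by (intro measurable_Pair measurable_into_bernoulli_product measurable_upper measurable_thin)

lemma monotone_thinning_joining: "monotone_joining (thinning_joining p)"
  unfolding monotone_joining_def thinning_joining_def
  by (subst AE_distr_iff[OF measurable_upper_thin]) (measurable, auto intro: thin_imp_upper)

lemma marker_form_thinning_joining: "marker_form (thinning_joining p)"
  unfolding marker_form_def thinning_joining_def
proof (subst AE_distr_iff[OF measurable_upper_thin])
  show "{w \<in> space (bernoulli_product p \<Otimes>\<^sub>M bernoulli_product (1 - p)).
      case w of (x, y) \<Rightarrow> \<forall>i. primary_marker x i = primary_marker y i}
    \<in> sets (bernoulli_product p \<Otimes>\<^sub>M bernoulli_product (1 - p))"
    unfolding primary_marker_def by measurable
qed (simp add: primary_marker_thin)

lemma (in thinning) joining_thinning_joining: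
  "joining (bernoulli_product p) (bernoulli_product (1 - p)) (thinning_joining p)"
  unfolding thinning_joining_def
  by (rule joining_distr_factor[OF prob_space_thinning_seed measurable_thinning_seed_shift
      distr_thinning_seed_shift measurable_upper_thin])
    (simp_all add: distr_upper distr_thin measurable_left_shift fun_eq_iff upper_def left_shift_def thin_shift)

theorem proposition4:
  fixes p :: real
  assumes "1/2 < p" and "p < 1"
  shows "\<exists>\<xi>. joining (bernoulli_product p) (bernoulli_product (1 - p)) \<xi>
              \<and> monotone_joining \<xi> \<and> marker_form \<xi>"
proof -
  interpret thinning p using assms by unfold_locales
  show ?thesis
    using joining_thinning_joining monotone_thinning_joining marker_form_thinning_joining by blast
qed

end
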